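(* Let $(A,[\cdot,\cdot])$ be an Acaa-algebra over a field $\mathbb K$ of characteristic $0$. For every $X\in A$, the linear map $\mathrm{ad}\,X:A\to A$, $Y\mapsto[X,Y]$, is a weighted anti-derivation of weight $2$, i.e. $2\,\mathrm{ad}\,X([Y,Z])=-[Y,\mathrm{ad}\,X(Z)]-[\mathrm{ad}\,X(Y),Z]$ for all $Y,Z\in A$.
   Context: An Acaa-algebra over a field $\mathbb K$ of characteristic $0$ is a $\mathbb K$-vector space $A$ with a bilinear product $[\cdot,\cdot]$ which is anticommutative, $[x,y]=-[y,x]$, and satisfies $[x_1,[x_2,x_3]]=[x_2,[x_3,x_1]]$ for all $x_1,x_2,x_3\in A$. For an algebra $B$ and $k\in\mathbb N^*$, a linear map $f\in\mathrm{End}(B)$ is a weighted anti-derivation of weight $k$ if $k f(xy)=-x f(y)-f(x)y$ for all $x,y\in B$. *)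

theory Defs
  imports Complex_Main
begin

definition bilinear_prod :: "('k::field \<Rightarrow> 'a::ab_group_add \<Rightarrow> 'a) \<Rightarrow> ('a \<Rightarrow> 'a \<Rightarrow> 'a) \<Rightarrow> bool" where
  "bilinear_prod scale br \<longleftrightarrow>
     (\<forall>x y z. br (x + y) z = br x z + br y z) \<and>
     (\<forall>x y z. br x (y + z) = br x y + br x z) \<and>
     (\<forall>c x y. br (scale c x) y = scale c (br x y)) \<and>
     (\<forall>c x y. br x (scale c y) = scale c (br x y))"

definition acaa_algebra :: "('k::field \<Rightarrow> 'a::ab_group_add \<Rightarrow> 'a) \<Rightarrow> ('a \<Rightarrow> 'a \<Rightarrow> 'a) \<Rightarrow> bool" where
  "acaa_algebra scale br \<longleftrightarrow>
     vector_space scale \<and> bilinear_prod scale br \<and>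
     (\<forall>x y. br x y = - br y x) \<and>
     (\<forall>x1 x2 x3. br x1 (br x2 x3) = br x2 (br x3 x1))"

definition weighted_anti_derivation ::
  "('k::field \<Rightarrow> 'a::ab_group_add \<Rightarrow> 'a) \<Rightarrow> ('a \<Rightarrow> 'a \<Rightarrow> 'a) \<Rightarrow> nat \<Rightarrow> ('a \<Rightarrow> 'a) \<Rightarrow> bool" where
  "weighted_anti_derivation scale br k f \<longleftrightarrow>
     k \<ge> 1 \<and> Vector_Spaces.linear scale scale f \<and>
     (\<forall>x y. scale (of_nat k) (f (br x y)) = - br x (f y) - br (f x) y)"

definition ad :: "('a \<Rightarrow> 'a \<Rightarrow> 'a) \<Rightarrow> 'a \<Rightarrow> 'a \<Rightarrow> 'a" where
  "ad br x = (\<lambda>y. br x y)"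

end

theory Submission
  imports Defs
begin

text \<open>The cyclic identity together with anticommutativity rewrites both terms
  \<open>[Y,[X,Z]]\<close> and \<open>[[X,Y],Z]\<close> as \<open>-[X,[Y,Z]]\<close>; adding them gives
  \<open>-2[X,[Y,Z]]\<close>. Characteristic 0 is not used.\<close>

lemma bilinear_prod_additive_right:
  assumes "bilinear_prod scale br"
  shows "additive (br x)"
  using assms unfolding bilinear_prod_def by (simp add: additive_def)

lemma bilinear_prod_linear_right:
  assumes "vector_space scale" and "bilinear_prod scale br"
  shows "Vector_Spaces.linear scale scale (br x)"
  using assms unfolding Vector_Spaces.linear_iff bilinear_prod_def by blast

lemma acaa_algebra_swap_left:
  assumes "acaa_algebra scale br"
  shows "br y (br x z) = - br x (br y z)"
proof -
  have anticomm: "br z y = - br y z"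
    and cyclic: "br y (br x z) = br x (br z y)"
    and "bilinear_prod scale br"
    using assms unfolding acaa_algebra_def by blast+
  then have "br x (- br y z) = - br x (br y z)"
    using additive.minus[OF bilinear_prod_additive_right] by blast
  with anticomm cyclic show ?thesis by simp
qed

lemma acaa_algebra_bracket_left:
  assumes "acaa_algebra scale br"
  shows "br (br x y) z = - br x (br y z)"
proof -
  have "br (br x y) z = - br z (br x y)"
    and "br z (br x y) = br x (br y z)"
    using assms unfolding acaa_algebra_def by blast+
  then show ?thesis by simp
qed

lemma (in module) scale_two: "scale 2 v = v + v"
  using scale_left_distrib[of 1 1 v] by simp

theorem mainTheorem8:
  fixes scale :: "'k::field_char_0 \<Rightarrow> 'a::ab_group_add \<Rightarrow> 'a"
    and br :: "'a \<Rightarrow> 'a \<Rightarrow> 'a"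
  assumes "acaa_algebra scale br"
  shows "\<forall>X. weighted_anti_derivation scale br 2 (ad br X)"
proof
  fix X
  have vs: "vector_space scale" and bl: "bilinear_prod scale br"
    using assms unfolding acaa_algebra_def by blast+
  interpret vector_space scale by (rule vs)
  have "scale 2 (br X (br x y)) = - br x (br X y) - br (br X x) y" for x y
    using scale_two
      acaa_algebra_swap_left[OF assms, of x X y] acaa_algebra_bracket_left[OF assms, of X x y]
    by simp
  with bilinear_prod_linear_right[OF vs bl] show "weighted_anti_derivation scale br 2 (ad br X)"
    unfolding weighted_anti_derivation_def ad_def by simp
qed

end
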